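(* Let $f:[0,1]\to\mathbb{R}$ with $f(0),f(1)\in\mathbb{Z}$, and let $n\in\mathbb{N}_+$, $n\ge 3$. Set \[ \phi_n(x):=(n+1)\int_0^1 t(1-t)^{n(1-x)}\frac{(1-t)^{nx}-t^{nx}}{1-2t}\,dt,\quad x\in[0,1]. \] If $f(x)-\phi_n(x)$ is monotone increasing on $[0,1]$, then $\widetilde{B}_n(f)$ is monotone increasing on $[0,1]$.
   Context: For $n\in\mathbb{N}_+$ and $f:[0,1]\to\mathbb{R}$, $\widetilde{B}_n(f)(x):=\sum_{k=0}^n \left[f\left(\frac{k}{n}\right)\binom{n}{k}\right]x^k(1-x)^{n-k}$, where $[\alpha]$ is the largest integer $\le\alpha$. Monotone increasing is meant in the non-strict sense. *)

theory Defs
  imports "HOL-Analysis.Analysis"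
begin

definition Btilde :: "nat \<Rightarrow> (real \<Rightarrow> real) \<Rightarrow> real \<Rightarrow> real" where
  "Btilde n f x = (\<Sum>k=0..n. real_of_int \<lfloor>f (real k / real n) * real (n choose k)\<rfloor>
                      * x ^ k * (1 - x) ^ (n - k))"

text \<open>phi_n(x) = (n+1) * integral over [0,1] of
  t (1-t)^(n(1-x)) ((1-t)^(nx) - t^(nx)) / (1-2t) dt
  (real powers via powr; the points t = 1/2 and t = 1 are a null set).\<close>
definition phi :: "nat \<Rightarrow> real \<Rightarrow> real" where
  "phi n x = real (n + 1) * integral {0..1}
      (\<lambda>t. t * (1 - t) powr (real n * (1 - x))
           * ((1 - t) powr (real n * x) - t powr (real n * x)) / (1 - 2 * t))"

end

theory Submission
  imports Defs
begin

(* At a grid point x = m/n all exponents in the integrand of phi n are integers, and away from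
   t = 1/2 the integrand is t (1-t)^(n-m) ((1-t)^m - t^m) / (1 - 2t). Consecutive grid integrands
   differ by t^(k+1) (1-t)^(n-k-1), whose integral is a Beta value, so
   phi n ((k+1)/n) - phi n (k/n) = 1 / (n choose k+1). Monotonicity of f - phi n therefore raises
   f by at least 1 / (n choose k+1) between grid points, which survives the rounding down of
   f (k/n) * (n choose k). The resulting coefficients a_k satisfy (n-k) a_k <= (k+1) a_(k+1), which
   is exactly nonnegativity of the derivative of sum_k a_k x^k (1-x)^(n-k) on [0,1]. *)

lemma Beta_of_nat_binomial:
  "real (a + b + 1) * Beta (real a + 1) (real b + 1) = 1 / real ((a + b) choose a)"
proof -
  have Gamma_nat: "Gamma (real j + 1) = fact j" for j
    using Gamma_fact[of j, where 'a = real] by (simp add: add.commute)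
  have "real a + 1 + (real b + 1) = real (a + b + 1) + 1"
    by simp
  then have "Beta (real a + 1) (real b + 1) = fact a * fact b / fact (a + b + 1)"
    by (simp only: Beta_def Gamma_nat)
  then show ?thesis
    by (simp add: binomial_fact)
qed

lemma has_integral_power_mult_power:
  "((\<lambda>t. t ^ a * (1 - t) ^ b) has_integral Beta (real a + 1) (real b + 1)) {0..1::real}"
proof -
  have "((\<lambda>t. t powr real a * (1 - t) powr real b) has_integral Beta (real a + 1) (real b + 1)) {0<..<1}"
    using has_integral_Beta_real[of "real a + 1" "real b + 1"] by (simp add: has_integral_Icc_iff_Ioo)
  then have "((\<lambda>t. t ^ a * (1 - t) ^ b) has_integral Beta (real a + 1) (real b + 1)) {0<..<1}"
    by (rule has_integral_cong[THEN iffD1, rotated]) (simp add: powr_realpow)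
  then show ?thesis
    by (simp add: has_integral_Icc_iff_Ioo)
qed

definition phi_kernel :: "nat \<Rightarrow> real \<Rightarrow> real \<Rightarrow> real" where
  "phi_kernel n x t = t * (1 - t) powr (real n * (1 - x))
     * ((1 - t) powr (real n * x) - t powr (real n * x)) / (1 - 2 * t)"

lemma phi_eq_integral_kernel: "phi n x = real (n + 1) * integral {0..1} (phi_kernel n x)"
  unfolding phi_def phi_kernel_def ..

lemma phi_kernel_grid:
  assumes "m \<le> n" "0 < t" "t < 1"
  shows "phi_kernel n (real m / real n) t = t * (1 - t) ^ (n - m) * ((1 - t) ^ m - t ^ m) / (1 - 2 * t)"
proof -
  have "real n * (real m / real n) = real m" and "real n * (1 - real m / real n) = real (n - m)"
    using assms(1) by (cases "n = 0"; simp add: field_simps)+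
  then show ?thesis
    using assms(2,3) by (simp add: phi_kernel_def powr_realpow)
qed

lemma phi_kernel_grid_Suc:
  assumes "k < n" "0 < t" "t < 1" "t \<noteq> 1/2"
  shows "phi_kernel n (real (Suc k) / real n) t
    = phi_kernel n (real k / real n) t + t ^ Suc k * (1 - t) ^ (n - Suc k)"
proof -
  have "(1 - t) ^ (n - k) = (1 - t) * (1 - t) ^ (n - Suc k)"
    using assms(1) by (simp flip: power_Suc add: Suc_diff_Suc)
  then have k: "phi_kernel n (real k / real n) t
      = t * (1 - t) * (1 - t) ^ (n - Suc k) * ((1 - t) ^ k - t ^ k) / (1 - 2 * t)"
    using assms by (simp add: phi_kernel_grid)
  moreover have Suc_k: "phi_kernel n (real (Suc k) / real n) t
      = t * (1 - t) ^ (n - Suc k) * ((1 - t) ^ Suc k - t ^ Suc k) / (1 - 2 * t)"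
    using assms by (intro phi_kernel_grid) auto
  moreover have "1 - 2 * t \<noteq> 0"
    using assms(4) by simp
  ultimately show ?thesis
    unfolding k Suc_k by (simp add: field_simps)
qed

lemma has_integral_phi_kernel_grid:
  assumes "m \<le> n"
  shows "(phi_kernel n (real m / real n) has_integral
           (\<Sum>k<m. Beta (real (Suc k) + 1) (real (n - Suc k) + 1))) {0..1}"
  using assms
proof (induction m)
  case 0
  have "(phi_kernel n (real 0 / real n) has_integral 0) {0..1}"
    by (rule has_integral_spike_finite[of "{0, 1}" _ _ "\<lambda>_. 0"]) (auto simp: phi_kernel_def)
  then show ?case
    by simp
next
  case (Suc k)
  then have "(phi_kernel n (real k / real n) has_integral
      (\<Sum>j<k. Beta (real (Suc j) + 1) (real (n - Suc j) + 1))) {0..1}"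
    by simp
  from has_integral_add[OF this has_integral_power_mult_power[of "Suc k" "n - Suc k"]]
  have add_step: "((\<lambda>t. phi_kernel n (real k / real n) t + t ^ Suc k * (1 - t) ^ (n - Suc k)) has_integral
      (\<Sum>j<Suc k. Beta (real (Suc j) + 1) (real (n - Suc j) + 1))) {0..1}"
    by simp
  show ?case
    by (rule has_integral_spike_finite[where S = "{0, 1/2, 1}", OF _ _ add_step])
      (use Suc.prems phi_kernel_grid_Suc in auto)
qed

lemma phi_grid:
  assumes "m \<le> n"
  shows "phi n (real m / real n) = (\<Sum>k<m. 1 / real (n choose Suc k))"
proof -
  have "real (n + 1) * Beta (real (Suc k) + 1) (real (n - Suc k) + 1) = 1 / real (n choose Suc k)"
    if "k < m" for k
    using that assms Beta_of_nat_binomial[of "Suc k" "n - Suc k"] by simp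
  then show ?thesis
    using has_integral_phi_kernel_grid[OF assms]
    by (simp add: phi_eq_integral_kernel integral_unique sum_distrib_left)
qed

lemma phi_grid_Suc:
  "k < n \<Longrightarrow> phi n (real (Suc k) / real n) = phi n (real k / real n) + 1 / real (n choose Suc k)"
  by (simp add: phi_grid del: of_nat_Suc)

lemma floor_scaled_mono:
  fixes x y c d p q :: real
  assumes "0 \<le> p" "0 \<le> q" "0 < d" "p * c = q * d" "x + 1 / d \<le> y"
  shows "of_int \<lfloor>x * c\<rfloor> * p \<le> of_int \<lfloor>y * d\<rfloor> * q"
proof -
  have "x * d \<le> of_int \<lfloor>y * d\<rfloor>"
    using assms(3,5) by (simp add: field_simps) linarith
  have "of_int \<lfloor>x * c\<rfloor> * p \<le> x * c * p"
    using assms(1) by (simp add: mult_right_mono)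
  also have "\<dots> = x * d * q"
    using assms(4) by (metis mult.assoc mult.commute)
  also have "\<dots> \<le> of_int \<lfloor>y * d\<rfloor> * q"
    using \<open>x * d \<le> of_int \<lfloor>y * d\<rfloor>\<close> assms(2) by (rule mult_right_mono)
  finally show ?thesis .
qed

lemma floor_binomial_coeff_step:
  fixes f :: "real \<Rightarrow> real"
  assumes "k < n" and "mono_on {0..1} (\<lambda>x. f x - phi n x)"
  shows "of_int \<lfloor>f (real k / real n) * real (n choose k)\<rfloor> * real (n - k)
    \<le> of_int \<lfloor>f (real (Suc k) / real n) * real (n choose Suc k)\<rfloor> * real (Suc k)"
proof (rule floor_scaled_mono)
  have "f (real k / real n) - phi n (real k / real n)
      \<le> f (real (Suc k) / real n) - phi n (real (Suc k) / real n)"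
    using assms(1) by (intro mono_onD[OF assms(2)]) (auto simp: field_simps)
  then show "f (real k / real n) + 1 / real (n choose Suc k) \<le> f (real (Suc k) / real n)"
    using phi_grid_Suc[OF assms(1)] by simp
  show "real (n - k) * real (n choose k) = real (Suc k) * real (n choose Suc k)"
    by (metis binomial_absorb_comp binomial_absorption of_nat_mult)
  show "0 < real (n choose Suc k)"
    using assms(1) by simp
qed simp_all

lemma has_real_derivative_bernstein_sum:
  "((\<lambda>x. \<Sum>k=0..Suc m. a k * x ^ k * (1 - x) ^ (Suc m - k)) has_real_derivative
     (\<Sum>k=0..m. (a (Suc k) * real (Suc k) - a k * real (Suc m - k)) * x ^ k * (1 - x) ^ (m - k))) (at x)"
proof -
  have deriv: "((\<lambda>x. \<Sum>k=0..Suc m. a k * x ^ k * (1 - x) ^ (Suc m - k)) has_real_derivative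
      (\<Sum>k=0..Suc m. a k * real k * x ^ (k - 1) * (1 - x) ^ (Suc m - k)
         - a k * x ^ k * real (Suc m - k) * (1 - x) ^ (Suc m - k - 1))) (at x)"
    by (intro DERIV_sum) (auto intro!: derivative_eq_intros simp: algebra_simps)
  have up: "(\<Sum>k=0..Suc m. a k * real k * x ^ (k - 1) * (1 - x) ^ (Suc m - k))
      = (\<Sum>k=0..m. a (Suc k) * real (Suc k) * x ^ k * (1 - x) ^ (m - k))"
    by (subst sum.atLeast0_atMost_Suc_shift) simp
  have down: "(\<Sum>k=0..Suc m. a k * x ^ k * real (Suc m - k) * (1 - x) ^ (Suc m - k - 1))
      = (\<Sum>k=0..m. a k * x ^ k * real (Suc m - k) * (1 - x) ^ (m - k))"
    by (subst sum.atLeast0_atMost_Suc) (auto intro!: sum.cong simp: Suc_diff_le)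
  show ?thesis
    using deriv unfolding sum_subtractf up down by (simp add: algebra_simps flip: sum_subtractf)
qed

lemma mono_on_bernstein_sum:
  assumes "\<And>k. k \<le> m \<Longrightarrow> a k * real (Suc m - k) \<le> a (Suc k) * real (Suc k)"
  shows "mono_on {0..1} (\<lambda>x. \<Sum>k=0..Suc m. a k * x ^ k * (1 - x) ^ (Suc m - k))"
proof (rule mono_onI)
  fix x y :: real
  assume "x \<in> {0..1}" "y \<in> {0..1}" "x \<le> y"
  then show "(\<Sum>k=0..Suc m. a k * x ^ k * (1 - x) ^ (Suc m - k))
      \<le> (\<Sum>k=0..Suc m. a k * y ^ k * (1 - y) ^ (Suc m - k))"
  proof (intro DERIV_nonneg_imp_nondecreasing[OF \<open>x \<le> y\<close>] exI conjI)
    fix z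
    assume "x \<le> z" "z \<le> y"
    with \<open>x \<in> {0..1}\<close> \<open>y \<in> {0..1}\<close> have "0 \<le> z" "z \<le> 1"
      by auto
    then show "0 \<le> (\<Sum>k=0..m. (a (Suc k) * real (Suc k) - a k * real (Suc m - k)) * z ^ k * (1 - z) ^ (m - k))"
      using assms by (intro sum_nonneg mult_nonneg_nonneg) auto
  qed (rule has_real_derivative_bernstein_sum)
qed

theorem corollary2p3:
  fixes f :: "real \<Rightarrow> real" and n :: nat
  assumes "f 0 \<in> \<int>" and "f 1 \<in> \<int>"
    and "n \<ge> 3"
    and "mono_on {0..1} (\<lambda>x. f x - phi n x)"
  shows "mono_on {0..1} (Btilde n f)"
proof -
  obtain m where m: "n = Suc m"
    using assms(3) by (cases n) auto
  define a where "a k = real_of_int \<lfloor>f (real k / real n) * real (n choose k)\<rfloor>" for k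
  have "Btilde n f = (\<lambda>x. \<Sum>k=0..Suc m. a k * x ^ k * (1 - x) ^ (Suc m - k))"
    unfolding Btilde_def a_def m by simp
  moreover have "mono_on {0..1} (\<lambda>x. \<Sum>k=0..Suc m. a k * x ^ k * (1 - x) ^ (Suc m - k))"
  proof (rule mono_on_bernstein_sum)
    fix k
    assume "k \<le> m"
    then show "a k * real (Suc m - k) \<le> a (Suc k) * real (Suc k)"
      using floor_binomial_coeff_step[OF _ assms(4), of k] m unfolding a_def by simp
  qed
  ultimately show ?thesis
    by simp
qed

end
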